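(* Let $p\in(0,1)$ and let $\beta:\mathbb{N}\to\mathbb{R}$ be a function such that $|\beta(n)|=O(\sqrt{n})$ and $\lim_{n\to\infty}|\beta(n)|=\infty$. Then for all sufficiently large $n$, $$\frac{B^{\lfloor np\rfloor}_n(p)}{B^{\lfloor np\rfloor-\lfloor\beta(n)\rfloor}_n(p)}\leq \exp\!\Big(\frac{1}{p(1-p)}\cdot\frac{\lfloor\beta(n)\rfloor^2}{n}\Big).$$
   Context: For $p\in(0,1)$, $n\in\mathbb{N}$ and $i\in\mathbb{Z}$, $B_n^i(p)=\binom{n}{i}p^i(1-p)^{n-i}$ if $0\leq i\leq n$ and $B_n^i(p)=0$ otherwise. For $f,g:\mathbb{N}\to\mathbb{R}^+_0$, $f(n)=O(g(n))$ means there is $C>0$ with $f(n)\leq Cg(n)$ for all sufficiently large $n$. *)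

theory Defs
  imports "HOL-Analysis.Analysis" "HOL-Library.Landau_Symbols"
begin

definition binom_prob :: "nat \<Rightarrow> int \<Rightarrow> real \<Rightarrow> real" where
  "binom_prob n i p = (if 0 \<le> i \<and> i \<le> int n
     then real (n choose nat i) * p ^ nat i * (1 - p) ^ (n - nat i) else 0)"

end

theory Submission
  imports Defs
begin

text \<open>Write k = floor(np) and m = |floor(beta n)|. Shifting the index by m multiplies
  B_n^i(p) by a product of m consecutive ratios (n - i) p / ((i + 1)(1 - p)). Near the mean each
  ratio is a product of two factors 1 + x with x = O(m/n), so 1 + x \<le> exp x bounds the product
  by the exponential of an arithmetic series, which is at most m^2 / (n p (1 - p)) when
  3 \<le> m \<le> n p / 3. Shifts in the other direction reduce to this through the symmetry
  B_n^i(p) = B_n^(n-i)(1 - p); since n - floor(np) is a ceiling rather than a floor of n(1 - p),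
  the core estimate only asks the upper index to be within 1 of the mean. The hypotheses on beta
  make 3 \<le> m \<le> n min(p, 1 - p) / 3 hold eventually.\<close>

lemma binom_prob_of_nat:
  "i \<le> n \<Longrightarrow> binom_prob n (int i) p = real (n choose i) * p ^ i * (1 - p) ^ (n - i)"
  by (simp add: binom_prob_def)

lemma binom_prob_pos: "i \<le> n \<Longrightarrow> 0 < p \<Longrightarrow> p < 1 \<Longrightarrow> 0 < binom_prob n (int i) p"
  by (simp add: binom_prob_of_nat)

lemma binom_prob_reflect:
  assumes "i \<le> n"
  shows "binom_prob n (int (n - i)) (1 - p) = binom_prob n (int i) p"
  using assms binom_prob_of_nat[of "n - i" n "1 - p"] binom_prob_of_nat[of i n p]
  by (simp add: binomial_symmetric[OF assms] mult_ac)

lemma binom_prob_Suc_ratio: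
  assumes "Suc i \<le> n" "0 < p" "p < 1"
  shows "binom_prob n (int (Suc i)) p / binom_prob n (int i) p
       = real (n - i) * p / (real (Suc i) * (1 - p))"
proof -
  have "real (n choose Suc i) * real (Suc i) = real (n choose i) * real (n - i)"
    by (metis binomial_absorb_comp binomial_absorption mult.commute of_nat_mult)
  then have choose: "real (n choose Suc i) = real (n choose i) * real (n - i) / real (Suc i)"
    by (simp add: field_simps)
  define c where "c = real (n choose i) * p ^ i * (1 - p) ^ (n - Suc i)"
  have "(1 - p) ^ (n - i) = (1 - p) * (1 - p) ^ (n - Suc i)"
    using assms by (simp flip: power_Suc add: Suc_diff_Suc)
  then have Bi: "binom_prob n (int i) p = (1 - p) * c"
    using assms by (simp add: binom_prob_of_nat c_def)
  have BSuc: "binom_prob n (int (Suc i)) p = real (n - i) * p / real (Suc i) * c"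
    unfolding binom_prob_of_nat[OF assms(1)] choose c_def by simp
  have "0 < c" using assms by (simp add: c_def)
  then show ?thesis
    unfolding Bi BSuc by (simp add: mult.commute)
qed

lemma binom_prob_add_ratio:
  assumes "k + m \<le> n" "0 < p" "p < 1"
  shows "binom_prob n (int (k + m)) p / binom_prob n (int k) p
       = (\<Prod>t<m. real (n - (k + t)) * p / (real (k + t + 1) * (1 - p)))"
  using assms(1)
proof (induction m)
  case (Suc m)
  have "binom_prob n (int (k + Suc m)) p / binom_prob n (int k) p
      = binom_prob n (int (k + m)) p / binom_prob n (int k) p
        * (binom_prob n (int (Suc (k + m))) p / binom_prob n (int (k + m)) p)"
    using binom_prob_pos[of "k + m" n p] Suc.prems assms by simp
  also have "\<dots> = (\<Prod>t<Suc m. real (n - (k + t)) * p / (real (k + t + 1) * (1 - p)))"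
    using Suc binom_prob_Suc_ratio[of "k + m" n p] assms by simp
  finally show ?case .
qed (use binom_prob_pos[of k n p] assms in simp)

lemma binom_ratio_factor_le_exp:
  fixes N p s a M :: real
  assumes "0 < N" "0 < p" "p < 1" "-1 \<le> s" "s \<le> a" "0 \<le> a" "a \<le> M" "M < N * p"
  shows "(N * (1 - p) + s + 1) * p / ((N * p - s) * (1 - p))
       \<le> exp ((a + 1) / (N * (1 - p)) + a / (N * p - M))"
proof -
  have q: "0 < N * (1 - p)" using assms by simp
  have dM: "0 < N * p - M" and d: "0 < N * p - s" using assms by linarith+
  have left: "(N * (1 - p) + s + 1) / (N * (1 - p)) \<le> exp ((a + 1) / (N * (1 - p)))"
  proof -
    have "(N * (1 - p) + s + 1) / (N * (1 - p)) = 1 + (s + 1) / (N * (1 - p))"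
      using assms by (simp only: add.assoc add_divide_distrib) simp
    also have "\<dots> \<le> exp ((s + 1) / (N * (1 - p)))" by (rule exp_ge_add_one_self)
    also have "\<dots> \<le> exp ((a + 1) / (N * (1 - p)))"
      using q assms by (simp add: divide_right_mono)
    finally show ?thesis .
  qed
  have right: "N * p / (N * p - s) \<le> exp (a / (N * p - M))"
  proof -
    have "N * p / (N * p - s) = 1 + s / (N * p - s)"
      using d by (simp add: field_simps)
    also have "\<dots> \<le> exp (s / (N * p - s))" by (rule exp_ge_add_one_self)
    also have "s / (N * p - s) \<le> a / (N * p - M)"
    proof (cases "s \<le> 0")
      case True
      then have "s / (N * p - s) \<le> 0" using d by (simp add: divide_nonpos_pos)
      also have "0 \<le> a / (N * p - M)" using assms dM by simp
      finally show ?thesis .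
    next
      case False
      then show ?thesis using assms dM by (intro frac_le) linarith+
    qed
    then have "exp (s / (N * p - s)) \<le> exp (a / (N * p - M))" by simp
    finally show ?thesis .
  qed
  have "(N * (1 - p) + s + 1) * p / ((N * p - s) * (1 - p))
      = (N * (1 - p) + s + 1) / (N * (1 - p)) * (N * p / (N * p - s))"
  proof -
    have "x * p / (y * (1 - p)) = x / (N * (1 - p)) * (N * p / y)" if "y \<noteq> 0" for x y :: real
      using that assms by (simp add: field_simps)
    then show ?thesis using d by simp
  qed
  also have "\<dots> \<le> exp ((a + 1) / (N * (1 - p))) * exp (a / (N * p - M))"
    using left right q d assms by (intro mult_mono) simp_all
  finally show ?thesis by (simp add: exp_add)
qed

lemma sum_lessThan_reflect: "(\<Sum>t<m. real m - real t) = real m * (real m + 1) / 2"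
  by (induction m) (auto simp: sum_subtractf field_simps)

lemma binom_ratio_exponent_sum_le:
  fixes N p :: real and m :: nat
  assumes "0 < p" "p < 1" "3 \<le> m" "3 * real m \<le> N * p"
  shows "(\<Sum>t<m. (real m - real t + 1) / (N * (1 - p)) + (real m - real t) / (N * p - real m))
       \<le> 1 / (p * (1 - p)) * (real m)\<^sup>2 / N"
proof -
  have "0 < N * p" using assms by linarith
  then have N: "0 < N" using assms by (simp add: zero_less_mult_iff)
  define A B where "A = 1 / (N * (1 - p))" and "B = 1 / (N * p - real m)"
  have "(\<Sum>t<m. (real m - real t + 1) / (N * (1 - p)) + (real m - real t) / (N * p - real m))
      = (\<Sum>t<m. A + (A + B) * (real m - real t))"
    by (intro sum.cong) (simp_all add: A_def B_def divide_inverse algebra_simps)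
  also have "\<dots> = A * real m * (real m + 3) / 2 + B * real m * (real m + 1) / 2"
    by (simp add: sum.distrib sum_lessThan_reflect flip: sum_distrib_left) (simp add: field_simps)
  also have "\<dots> \<le> A * real m * (real m + 3) / 2 + 3 / (2 * N * p) * real m * (real m + 1) / 2"
  proof -
    have "2 * N * p / 3 \<le> N * p - real m" using assms by linarith
    then have "B \<le> 1 / (2 * N * p / 3)"
      unfolding B_def using N assms by (intro divide_left_mono) auto
    then have "B \<le> 3 / (2 * N * p)" by simp
    then show ?thesis by (intro add_left_mono divide_right_mono mult_right_mono) simp_all
  qed
  also have "\<dots> = real m * (2 * p * (real m + 3) + 3 * (1 - p) * (real m + 1)) / (4 * N * p * (1 - p))"
    using assms N by (simp add: A_def field_simps)
  also have "\<dots> \<le> real m * (4 * real m) / (4 * N * p * (1 - p))"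
  proof -
    have "0 \<le> (real m - 3) * (1 + p)" using assms by simp
    then have "2 * p * (real m + 3) + 3 * (1 - p) * (real m + 1) \<le> 4 * real m"
      by (simp add: algebra_simps)
    then show ?thesis using assms N by (intro divide_right_mono mult_left_mono) auto
  qed
  also have "\<dots> = 1 / (p * (1 - p)) * (real m)\<^sup>2 / N"
    using assms N by (simp add: field_simps power2_eq_square)
  finally show ?thesis .
qed

lemma binom_prob_ratio_le_exp:
  fixes n j m :: nat and p :: real
  assumes p: "0 < p" "p < 1" and m: "3 \<le> m" "3 * real m \<le> real n * p"
    and near_mode: "real n * p - 1 < real (j + m)" "real (j + m) < real n * p + 1"
  shows "binom_prob n (int (j + m)) p / binom_prob n (int j) p
       \<le> exp (1 / (p * (1 - p)) * (real m)\<^sup>2 / real n)"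
proof -
  have "real n * p \<le> real n" using p by (simp add: mult_left_le)
  then have jm_n: "j + m \<le> n" using near_mode by linarith
  have n: "0 < real n" using m by (cases "n = 0") auto
  have factor: "real (n - (j + t)) * p / (real (j + t + 1) * (1 - p))
      \<le> exp ((real m - real t + 1) / (real n * (1 - p)) + (real m - real t) / (real n * p - real m))"
    if "t < m" for t
  proof -
    define s where "s = real n * p - real (j + t + 1)"
    have "real (n - (j + t)) = real n * (1 - p) + s + 1" "real (j + t + 1) = real n * p - s"
      using \<open>t < m\<close> jm_n by (simp_all add: s_def of_nat_diff algebra_simps)
    moreover have "-1 \<le> s" "s \<le> real m - real t"
      using \<open>t < m\<close> near_mode by (simp_all add: s_def)
    ultimately show ?thesis
      using \<open>t < m\<close> n p m by (simp add: binom_ratio_factor_le_exp)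
  qed
  have "binom_prob n (int (j + m)) p / binom_prob n (int j) p
      = (\<Prod>t<m. real (n - (j + t)) * p / (real (j + t + 1) * (1 - p)))"
    using binom_prob_add_ratio[OF jm_n p] .
  also have "\<dots> \<le> (\<Prod>t<m. exp ((real m - real t + 1) / (real n * (1 - p))
                                 + (real m - real t) / (real n * p - real m)))"
    using factor p jm_n by (intro prod_mono) (simp add: divide_nonneg_pos)
  also have "\<dots> = exp (\<Sum>t<m. (real m - real t + 1) / (real n * (1 - p))
                            + (real m - real t) / (real n * p - real m))"
    by (simp add: exp_sum)
  also have "\<dots> \<le> exp (1 / (p * (1 - p)) * (real m)\<^sup>2 / real n)"
    using binom_ratio_exponent_sum_le[OF p m] by simp
  finally show ?thesis .
qed

lemma binom_prob_floor_ratio_le_exp: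
  fixes n :: nat and p :: real and b :: int
  assumes p: "0 < p" "p < 1"
    and b: "3 \<le> \<bar>b\<bar>" "3 * \<bar>real_of_int b\<bar> \<le> real n * min p (1 - p)"
  shows "binom_prob n \<lfloor>real n * p\<rfloor> p / binom_prob n (\<lfloor>real n * p\<rfloor> - b) p
       \<le> exp (1 / (p * (1 - p)) * (real_of_int b)\<^sup>2 / real n)"
proof -
  define k where "k = nat \<lfloor>real n * p\<rfloor>"
  have k: "\<lfloor>real n * p\<rfloor> = int k" using p by (simp add: k_def)
  then have k_near: "real k \<le> real n * p" "real n * p < real k + 1"
    by (metis floor_eq_iff of_int_of_nat_eq)+
  define m where "m = nat \<bar>b\<bar>"
  have "real n * min p (1 - p) \<le> real n * p" "real n * min p (1 - p) \<le> real n * (1 - p)"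
    by (simp_all add: mult_left_mono)
  moreover have "real m = \<bar>real_of_int b\<bar>" by (simp add: m_def)
  ultimately have m: "3 \<le> m" "3 * real m \<le> real n * p" "3 * real m \<le> real n * (1 - p)"
    using b by (simp_all add: m_def le_nat_iff)
  have m_sq: "(real m)\<^sup>2 = (real_of_int b)\<^sup>2"
    by (simp add: m_def)
  show ?thesis
  proof (cases "0 \<le> b")
    case True
    show ?thesis
    proof (cases "m \<le> k")
      case True
      then have "\<lfloor>real n * p\<rfloor> = int (k - m + m)" "\<lfloor>real n * p\<rfloor> - b = int (k - m)"
        using k \<open>0 \<le> b\<close> by (simp_all add: m_def)
      moreover have "binom_prob n (int (k - m + m)) p / binom_prob n (int (k - m)) p
          \<le> exp (1 / (p * (1 - p)) * (real m)\<^sup>2 / real n)"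
        by (rule binom_prob_ratio_le_exp[OF p m(1,2)]) (use True k_near in simp_all)
      ultimately show ?thesis by (simp add: m_sq)
    next
      case False
      \<comment> \<open>the denominator lies outside \<open>0..n\<close>, hence is 0, and division by 0 gives 0\<close>
      then have "\<lfloor>real n * p\<rfloor> - b < 0"
        using k \<open>0 \<le> b\<close> by (simp add: m_def nat_le_iff)
      then show ?thesis by (simp add: binom_prob_def)
    qed
  next
    case False
    show ?thesis
    proof (cases "k + m \<le> n")
      case True
      have "n - k = n - (k + m) + m" using True by simp
      moreover have "binom_prob n \<lfloor>real n * p\<rfloor> p = binom_prob n (int (n - k)) (1 - p)"
        unfolding k by (rule binom_prob_reflect[symmetric]) (use True in simp)
      ultimately have "binom_prob n \<lfloor>real n * p\<rfloor> p = binom_prob n (int (n - (k + m) + m)) (1 - p)"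
        by simp
      moreover have "\<lfloor>real n * p\<rfloor> - b = int (k + m)"
        using k \<open>\<not> 0 \<le> b\<close> by (simp add: m_def)
      then have "binom_prob n (\<lfloor>real n * p\<rfloor> - b) p = binom_prob n (int (n - (k + m))) (1 - p)"
        using binom_prob_reflect[OF True, of p] by simp
      ultimately have "binom_prob n \<lfloor>real n * p\<rfloor> p / binom_prob n (\<lfloor>real n * p\<rfloor> - b) p
          = binom_prob n (int (n - (k + m) + m)) (1 - p) / binom_prob n (int (n - (k + m))) (1 - p)"
        by simp
      also have "\<dots> \<le> exp (1 / ((1 - p) * (1 - (1 - p))) * (real m)\<^sup>2 / real n)"
      proof (rule binom_prob_ratio_le_exp)
        have "real (n - (k + m) + m) = real n - real k" using True by (simp add: of_nat_diff)
        then show "real n * (1 - p) - 1 < real (n - (k + m) + m)"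
          and "real (n - (k + m) + m) < real n * (1 - p) + 1"
          using k_near by (simp_all add: algebra_simps)
      qed (use p m in simp_all)
      finally show ?thesis by (simp add: m_sq mult.commute)
    next
      case False
      then have "int n < \<lfloor>real n * p\<rfloor> - b"
        using k \<open>\<not> 0 \<le> b\<close> by (simp add: m_def)
      then show ?thesis by (simp add: binom_prob_def)
    qed
  qed
qed

lemma eventually_sqrt_le_linear:
  fixes C c d :: real
  assumes "0 < d"
  shows "\<forall>\<^sub>F n in sequentially. C * sqrt (real n) + c \<le> d * real n"
proof -
  define K where "K = max 1 ((\<bar>C\<bar> + \<bar>c\<bar>) / d)"
  have "filterlim (\<lambda>n. sqrt (real n)) at_top sequentially"
    by (rule filterlim_compose[OF sqrt_at_top filterlim_real_sequentially])
  then have "\<forall>\<^sub>F n in sequentially. K \<le> sqrt (real n)"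
    by (simp add: filterlim_at_top)
  then show ?thesis
  proof eventually_elim
    case (elim n)
    define r where "r = sqrt (real n)"
    have r: "1 \<le> r" "\<bar>C\<bar> + \<bar>c\<bar> \<le> d * r"
      using elim assms by (simp_all add: K_def r_def pos_divide_le_eq mult.commute)
    have "C * r \<le> \<bar>C\<bar> * r" using r by (intro mult_right_mono) simp_all
    moreover have "\<bar>c\<bar> * 1 \<le> \<bar>c\<bar> * r" using r by (intro mult_left_mono) simp_all
    ultimately have "C * r + c \<le> (\<bar>C\<bar> + \<bar>c\<bar>) * r"
      unfolding distrib_right using abs_ge_self[of c] by linarith
    also have "\<dots> \<le> (d * r) * r" using r by (simp add: mult_right_mono)
    finally show ?case by (simp add: r_def mult.assoc)
  qed
qed

theorem lemma3:
  fixes p :: real and \<beta> :: "nat \<Rightarrow> real"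
  assumes "0 < p" "p < 1"
    and "(\<lambda>n. \<bar>\<beta> n\<bar>) \<in> O(\<lambda>n. sqrt (real n))"
    and "filterlim (\<lambda>n. \<bar>\<beta> n\<bar>) at_top sequentially"
  shows "\<forall>\<^sub>F n in sequentially.
    binom_prob n \<lfloor>real n * p\<rfloor> p / binom_prob n (\<lfloor>real n * p\<rfloor> - \<lfloor>\<beta> n\<rfloor>) p
      \<le> exp (1 / (p * (1 - p)) * (real_of_int \<lfloor>\<beta> n\<rfloor>)\<^sup>2 / real n)"
proof -
  obtain C where "\<forall>\<^sub>F n in sequentially. \<bar>\<beta> n\<bar> \<le> C * sqrt (real n)"
    using assms(3) by (auto elim: landau_o.bigE)
  moreover have "\<forall>\<^sub>F n in sequentially. 4 \<le> \<bar>\<beta> n\<bar>"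
    using assms(4) by (simp add: filterlim_at_top)
  moreover have "\<forall>\<^sub>F n in sequentially. (3 * C) * sqrt (real n) + 3 \<le> min p (1 - p) * real n"
    using assms(1,2) by (intro eventually_sqrt_le_linear) simp
  ultimately show ?thesis
  proof eventually_elim
    case (elim n)
    have "\<bar>\<beta> n\<bar> - 1 \<le> \<bar>real_of_int \<lfloor>\<beta> n\<rfloor>\<bar>" "\<bar>real_of_int \<lfloor>\<beta> n\<rfloor>\<bar> \<le> \<bar>\<beta> n\<bar> + 1"
      by (smt (verit) of_int_floor_le real_of_int_floor_gt_diff_one)+
    with elim have "3 \<le> \<bar>real_of_int \<lfloor>\<beta> n\<rfloor>\<bar>" "3 * \<bar>real_of_int \<lfloor>\<beta> n\<rfloor>\<bar> \<le> real n * min p (1 - p)"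
      by (simp_all add: algebra_simps)
    then show ?case
      using binom_prob_floor_ratio_le_exp[OF assms(1,2)] by simp
  qed
qed

end
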